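(* Let $m\ge1$, let $R_-,R_+\subset\mathbb Z$ be disjoint arithmetic progressions with common difference $m$ with $|R_-|+|R_+|=d$ and $\min(R_-\cup R_+)=0$, and let $T_{long}=T_{I,R}$ be the associated long-diagonal pentagram map in $\mathbb{RP}^d$. Define $$J_\pm=\{\max R_\pm,\ \max R_\pm+m,\ \dots,\ \min R_\pm+m(d-1)\}=\bigcap_{r\in R_\pm}\{r,r+m,\dots,r+m(d-1)\}.$$ Then $|J_-|+|J_+|=d+2$, and for a generic twisted $n$-gon $\{v_k\}$ in $\mathbb{RP}^d$ one has, for every $k$, $$\bigcap_{r\in R_\pm}P_{k+r}=\mathrm{span}\{v_{k+j}:j\in J_\pm\},\qquad \hat v_k=\mathrm{span}\{v_{k+j}:j\in J_-\}\cap\mathrm{span}\{v_{k+j}:j\in J_+\}.$$ Moreover $J_-$ and $J_+$ are disjoint, except in the case $R_-=\{0,m,\dots,km\}$, $R_+=\{(k+1)m,\dots,(d-1)m\}$ (or the same with $R_-$ and $R_+$ swapped), in which $T_{I,R}$ is the identity map up to a shift of indices.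
   Context: For $(d-1)$-tuples of positive integers $I=(i_1,\dots,i_{d-1})$ and $R=(r_1,\dots,r_{d-1})$ and a twisted $n$-gon $\{v_k\}$ in $\mathbb{RP}^d$ (a sequence with $v_{k+n}=M(v_k)$ for a fixed projective transformation $M$), define the diagonal hyperplanes $P_k=\mathrm{span}\langle v_k,v_{k+i_1},\dots,v_{k+i_1+\dots+i_{d-1}}\rangle$ and the map $T_{I,R}$ by $\hat v_k=P_k\cap P_{k+r_1}\cap\dots\cap P_{k+r_1+\dots+r_{d-1}}$. A long-diagonal pentagram map is $T_{I,R}$ where $I=(m,\dots,m)$ and $R$ is the sequence of differences between consecutive elements of $R_-\cup R_+$ (in increasing order), for two disjoint arithmetic progressions $R_-,R_+$ with common difference $m$ and $d$ elements in total. *)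

theory Defs
  imports "HOL-Analysis.Analysis"
begin

text \<open>Points of RP^d are represented by nonzero vectors of real^'n with CARD('n) = d+1;
  projective subspaces by linear subspaces (spans).  Polygons are indexed by integers.\<close>

definition twisted_ngon :: "nat \<Rightarrow> (int \<Rightarrow> real^'n) \<Rightarrow> bool" where
  "twisted_ngon n V \<longleftrightarrow> n > 0 \<and> (\<forall>k. V k \<noteq> 0) \<and>
     (\<exists>M::real^'n^'n. invertible M \<and> (\<forall>k. \<exists>c. c \<noteq> 0 \<and> V (k + int n) = c *\<^sub>R (M *v V k)))"

definition psums :: "int list \<Rightarrow> int list" where
  "psums xs = map (\<lambda>j. sum_list (take j xs)) [0..<length xs + 1]"

definition diag_plane :: "(int \<Rightarrow> real^'n) \<Rightarrow> int list \<Rightarrow> int \<Rightarrow> (real^'n) set" where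
  "diag_plane V I k = span (V ` ((\<lambda>j. k + j) ` set (psums I)))"

definition TIR_point :: "(int \<Rightarrow> real^'n) \<Rightarrow> int list \<Rightarrow> int list \<Rightarrow> int \<Rightarrow> (real^'n) set" where
  "TIR_point V I R k = (\<Inter>r\<in>set (psums R). diag_plane V I (k + r))"

definition diffs :: "int list \<Rightarrow> int list" where
  "diffs xs = map2 (\<lambda>a b. b - a) xs (tl xs)"

definition long_I :: "int \<Rightarrow> nat \<Rightarrow> int list" where
  "long_I m d = replicate (d - 1) m"

definition long_R :: "int set \<Rightarrow> int set \<Rightarrow> int list" where
  "long_R Rm Rp = diffs (sorted_list_of_set (Rm \<union> Rp))"

definition arith_prog :: "int \<Rightarrow> int set \<Rightarrow> bool" where
  "arith_prog m A \<longleftrightarrow> (\<exists>a s. s \<ge> 1 \<and> A = {a + m * int i | i. i < s})"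

definition J_set :: "int \<Rightarrow> nat \<Rightarrow> int set \<Rightarrow> int set" where
  "J_set m d R = {Max R + m * int i | i. Max R + m * int i \<le> Min R + m * int (d - 1)}"

text \<open>Genericity (general position): for every k, any at most d+1 vertices with distinct indices
  in the window k..k+L are linearly independent (and distinct).\<close>
definition gen_pos :: "nat \<Rightarrow> int \<Rightarrow> (int \<Rightarrow> real^'n) \<Rightarrow> bool" where
  "gen_pos d L V \<longleftrightarrow> (\<forall>k S. S \<subseteq> {k..k + L} \<and> card S \<le> d + 1 \<longrightarrow>
       inj_on V S \<and> independent (V ` S))"

end

theory Submission
  imports Defs
begin

(* The hyperplane P_{k+r} is spanned by the d vertices v_{k+r}, v_{k+r+m}, ..., v_{k+r+(d-1)m}.
   As r runs through a progression R with difference m, these spanning sets are sliding windows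
   along a single progression of vertices.  Two consecutive windows together contain d+1 vertices,
   which are independent by genericity, so their spans meet exactly in the span of the common
   vertices; by induction, the intersection of all P_{k+r} with r in R is spanned by the vertices
   common to all windows, namely those indexed by k + J.  The sets J_- and J_+ can only meet when
   R_- and R_+ are an initial and a final segment of {0, m, ..., (d-1)m}; then they share exactly
   the index m(d-1), their union has d+1 elements, and the same independence argument shows that
   the image point at k is v_{k+m(d-1)}. *)

section \<open>Spans of generic vertices\<close>

lemma span_Int_span_of_independent:
  fixes A B :: "'a::real_vector set"
  assumes ind: "independent (A \<union> B)"
  shows "span A \<inter> span B = span (A \<inter> B)"
proof
  show "span (A \<inter> B) \<subseteq> span A \<inter> span B" by (simp add: span_mono)
next
  show "span A \<inter> span B \<subseteq> span (A \<inter> B)"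
  proof
    fix x assume x: "x \<in> span A \<inter> span B"
    let ?r = "representation (A \<union> B) x"
    have rA: "?r = representation A x" and rB: "?r = representation B x"
      by (rule real_vector.representation_extend[OF ind]; use x in auto)+
    have supp: "{b. ?r b \<noteq> 0} \<subseteq> A \<inter> B"
      using real_vector.representation_ne_zero[of A x] real_vector.representation_ne_zero[of B x]
      by (auto simp: rA [symmetric] rB [symmetric])
    have "x \<in> span (A \<union> B)"
      using x span_mono[of A "A \<union> B"] by blast
    then have "x = (\<Sum>b | ?r b \<noteq> 0. ?r b *\<^sub>R b)"
      by (simp add: real_vector.sum_nonzero_representation_eq[OF ind])
    also have "\<dots> \<in> span (A \<inter> B)"
      using supp by (intro span_sum) (auto intro: span_scale span_base)
    finally show "x \<in> span (A \<inter> B)" .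
  qed
qed

lemma span_image_Int_gen_pos:
  fixes V :: "int \<Rightarrow> real^'n"
  assumes "gen_pos d L V" and "A \<union> B \<subseteq> {k..k + L}" and "card (A \<union> B) \<le> d + 1"
  shows "span (V ` A) \<inter> span (V ` B) = span (V ` (A \<inter> B))"
proof -
  have inj: "inj_on V (A \<union> B)" and ind: "independent (V ` (A \<union> B))"
    using assms unfolding gen_pos_def by blast+
  have "V ` (A \<inter> B) = V ` A \<inter> V ` B"
    using inj by (intro inj_on_image_Int) auto
  then show ?thesis
    using span_Int_span_of_independent ind by (metis image_Un)
qed

lemma Inter_span_sliding_windows:
  fixes V :: "int \<Rightarrow> real^'n" and G :: "nat \<Rightarrow> int"
  assumes "inj G" and "gen_pos d L V" and "G ` {..<t + d} \<subseteq> {k..k + L}"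
  shows "(\<Inter>u\<in>{..t}. span (V ` G ` {u..<u + d})) = span (V ` G ` {t..<d})"
  using assms(3)
proof (induction t)
  case 0
  then show ?case by simp
next
  case (Suc t)
  have window: "G ` {t..<Suc t + d} \<subseteq> {k..k + L}"
    using Suc.prems image_mono[of "{t..<Suc t + d}" "{..<Suc t + d}" G] by auto
  have "G ` {..<t + d} \<subseteq> {k..k + L}"
    using Suc.prems image_mono[of "{..<t + d}" "{..<Suc t + d}" G] by auto
  note IH = Suc.IH[OF this]
  have "card (G ` {t..<d} \<union> G ` {Suc t..<Suc t + d}) \<le> card (G ` {t..<Suc t + d})"
    by (intro card_mono) auto
  also have "\<dots> \<le> d + 1"
    using card_image_le[of "{t..<Suc t + d}" G] by simp
  finally have card: "card (G ` {t..<d} \<union> G ` {Suc t..<Suc t + d}) \<le> d + 1" .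
  have "(\<Inter>u\<in>{..Suc t}. span (V ` G ` {u..<u + d}))
      = (\<Inter>u\<in>{..t}. span (V ` G ` {u..<u + d})) \<inter> span (V ` G ` {Suc t..<Suc t + d})"
    by (simp add: atMost_Suc Int_commute)
  also have "\<dots> = span (V ` G ` {t..<d}) \<inter> span (V ` G ` {Suc t..<Suc t + d})"
    by (simp only: IH)
  also have "\<dots> = span (V ` (G ` {t..<d} \<inter> G ` {Suc t..<Suc t + d}))"
    using window card by (intro span_image_Int_gen_pos[OF assms(2)]) auto
  also have "G ` {t..<d} \<inter> G ` {Suc t..<Suc t + d} = G ` {Suc t..<d}"
    by (auto simp: image_Int[OF assms(1), symmetric])
  finally show ?case .
qed

section \<open>Arithmetic progressions of indices\<close>

lemma arith_prog_iff: "arith_prog m A \<longleftrightarrow> (\<exists>a s. 1 \<le> s \<and> A = (\<lambda>i. a + m * int i) ` {..<s})"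
  unfolding arith_prog_def by (simp add: image_Collect lessThan_def)

lemma inj_arith_prog: "(m::int) \<ge> 1 \<Longrightarrow> inj (\<lambda>i. a + m * int i)"
  by (auto simp: inj_def)

lemma card_arith_prog: "(m::int) \<ge> 1 \<Longrightarrow> card ((\<lambda>i. a + m * int i) ` N) = card N"
  by (rule card_image) (auto dest: inj_arith_prog inj_on_subset)

lemma Min_arith_prog:
  assumes "(m::int) \<ge> 1" and "s \<ge> 1"
  shows "Min ((\<lambda>i. a + m * int i) ` {..<s}) = a"
  using assms by (intro Min_eqI) (auto intro!: image_eqI[where x=0])

lemma Max_arith_prog:
  assumes "(m::int) \<ge> 1" and "s \<ge> 1"
  shows "Max ((\<lambda>i. a + m * int i) ` {..<s}) = a + m * int (s - 1)"
  using assms by (intro Max_eqI) (auto intro!: image_eqI[where x="s - 1"] mult_left_mono)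

lemma arith_prog_shift:
  "(\<lambda>i. a + m * int u + m * int i) ` {..<d} = (\<lambda>i. a + m * int i) ` {u..<u + d}"
proof -
  have "{u..<u + d} = plus u ` {..<d}"
    by (simp add: lessThan_atLeast0 add.commute)
  then show ?thesis
    by (simp add: image_image algebra_simps)
qed

lemma Inter_sliding_windows:
  assumes "1 \<le> s" and "s \<le> d"
  shows "(\<Inter>u\<in>{..<s}. {u..<u + d}) = {s - 1..<(d::nat)}"
proof -
  have "x \<in> {s - 1..<d}" if "\<forall>u<s. u \<le> x \<and> x < u + d" for x
    using that[rule_format, of 0] that[rule_format, of "s - 1"] assms by auto
  then show ?thesis
    using assms by auto
qed

lemma J_set_arith_prog:
  assumes m: "(m::int) \<ge> 1" and s: "1 \<le> s" "s \<le> d"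
  shows "J_set m d ((\<lambda>i. a + m * int i) ` {..<s}) = (\<lambda>i. a + m * int i) ` {s - 1..<d}"
proof -
  have "a + m * int (s - 1) + m * int i \<le> a + m * int (d - 1) \<longleftrightarrow> s - 1 + i < d" for i
  proof -
    have "a + m * int (s - 1) + m * int i \<le> a + m * int (d - 1) \<longleftrightarrow> int (s - 1 + i) \<le> int (d - 1)"
      using m by (simp add: algebra_simps flip: distrib_left)
    then show ?thesis using s by auto
  qed
  then have "J_set m d ((\<lambda>i. a + m * int i) ` {..<s})
      = (\<lambda>i. a + m * int (s - 1) + m * int i) ` {i. s - 1 + i < d}"
    unfolding J_set_def Max_arith_prog[OF m s(1)] Min_arith_prog[OF m s(1)] by auto
  also have "{i. s - 1 + i < d} = {..<d - (s - 1)}"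
    by auto
  also have "(\<lambda>i. a + m * int (s - 1) + m * int i) ` {..<d - (s - 1)} = (\<lambda>i. a + m * int i) ` {s - 1..<d}"
    using arith_prog_shift[of a m "s - 1" "d - (s - 1)"] s by simp
  finally show ?thesis .
qed

lemma Inter_windows_arith_prog:
  assumes m: "(m::int) \<ge> 1" and s: "1 \<le> s" "s \<le> d"
  shows "(\<Inter>r\<in>(\<lambda>i. a + m * int i) ` {..<s}. {r + m * int i | i. i < d})
       = (\<lambda>i. a + m * int i) ` {s - 1..<d}"
proof -
  have "(\<Inter>r\<in>(\<lambda>i. a + m * int i) ` {..<s}. {r + m * int i | i. i < d})
      = (\<Inter>u\<in>{..<s}. (\<lambda>i. a + m * int i) ` {u..<u + d})"
  proof -
    have "{r + m * int i | i. i < d} = (\<lambda>i. r + m * int i) ` {..<d}" for r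
      by auto
    then show ?thesis
      by (simp add: image_image arith_prog_shift)
  qed
  also have "\<dots> = (\<lambda>i. a + m * int i) ` (\<Inter>u\<in>{..<s}. {u..<u + d})"
    using image_INT[OF inj_arith_prog[OF m], of "{..<s}" "\<lambda>u. {u..<u + d}" 0] s by simp
  finally show ?thesis
    using Inter_sliding_windows[OF s] by simp
qed

lemma J_set_subset: "(m::int) \<ge> 0 \<Longrightarrow> J_set m d R \<subseteq> {Max R..Min R + m * int (d - 1)}"
  by (auto simp: J_set_def)

lemma finite_J_set: "(m::int) \<ge> 0 \<Longrightarrow> finite (J_set m d R)"
  using finite_subset[OF J_set_subset finite_atLeastAtMost_int] .

definition prog_split :: "int \<Rightarrow> nat \<Rightarrow> int set \<Rightarrow> int set \<Rightarrow> bool" where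
  "prog_split m d A B \<longleftrightarrow>
     (\<exists>j<d - 1. A = {m * int i | i. i \<le> j} \<and> B = {m * int i | i. j < i \<and> i \<le> d - 1})"

lemma prog_split_iff:
  "prog_split m d A B \<longleftrightarrow>
     (\<exists>s. 1 \<le> s \<and> s < d \<and> A = (\<lambda>i. m * int i) ` {..<s} \<and> B = (\<lambda>i. m * int i) ` {s..<d})"
proof -
  have init: "{m * int i | i. i \<le> j} = (\<lambda>i. m * int i) ` {..<Suc j}" for j
    by (simp add: image_Collect lessThan_Suc_atMost atMost_def)
  have final: "{m * int i | i. j < i \<and> i \<le> d - 1} = (\<lambda>i. m * int i) ` {Suc j..<d}"
    if "j < d - 1" for j
  proof -
    have "{Suc j..<d} = {i. j < i \<and> i \<le> d - 1}"
      using that by auto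
    then show ?thesis
      by (simp add: image_Collect)
  qed
  show ?thesis
  proof
    assume "prog_split m d A B"
    then obtain j where "j < d - 1" "A = {m * int i | i. i \<le> j}"
      "B = {m * int i | i. j < i \<and> i \<le> d - 1}"
      unfolding prog_split_def by blast
    then show "\<exists>s. 1 \<le> s \<and> s < d \<and> A = (\<lambda>i. m * int i) ` {..<s} \<and> B = (\<lambda>i. m * int i) ` {s..<d}"
      using init final by (intro exI[of _ "Suc j"]) auto
  next
    assume "\<exists>s. 1 \<le> s \<and> s < d \<and> A = (\<lambda>i. m * int i) ` {..<s} \<and> B = (\<lambda>i. m * int i) ` {s..<d}"
    then obtain s where "1 \<le> s" "s < d" "A = (\<lambda>i. m * int i) ` {..<s}" "B = (\<lambda>i. m * int i) ` {s..<d}"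
      by blast
    moreover have "Suc (s - 1) = s"
      using \<open>1 \<le> s\<close> by simp
    ultimately show "prog_split m d A B"
      unfolding prog_split_def using init[of "s - 1"] final[of "s - 1"]
      by (intro exI[of _ "s - 1"]) auto
  qed
qed

lemma J_set_Int_prog_split:
  assumes m: "(m::int) \<ge> 1" and split: "prog_split m d A B"
  shows "J_set m d A \<inter> J_set m d B = {m * int (d - 1)}"
proof -
  obtain s where s: "1 \<le> s" "s < d" and A: "A = (\<lambda>i. 0 + m * int i) ` {..<s}"
    and B: "B = (\<lambda>i. m * int i) ` {s..<d}"
    using split unfolding prog_split_iff by auto
  have JA: "J_set m d A = (\<lambda>i. m * int i) ` {s - 1..<d}"
    unfolding A using J_set_arith_prog[OF m, of s d 0] s by simp
  have "B = (\<lambda>i. 0 + m * int s + m * int i) ` {..<d - s}"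
    unfolding B arith_prog_shift using s by simp
  then have "J_set m d B = (\<lambda>i. 0 + m * int s + m * int i) ` {d - s - 1..<d}"
    by (simp only:) (rule J_set_arith_prog[OF m]; use s in auto)
  also have "\<dots> = (\<lambda>i. m * int i) ` {d - 1..<d + s}"
  proof -
    have shift: "{d - 1..<d + s} = plus s ` {d - s - 1..<d}"
      using s by simp
    show ?thesis
      unfolding shift image_image by (simp add: algebra_simps)
  qed
  finally have JB: "J_set m d B = (\<lambda>i. m * int i) ` {d - 1..<d + s}" .
  have "{s - 1..<d} \<inter> {d - 1..<d + s} = {d - 1}"
    using s by auto
  then show ?thesis
    using image_Int[OF inj_arith_prog[OF m, of 0], of "{s - 1..<d}" "{d - 1..<d + s}"]
    by (simp add: JA JB)
qed

lemma J_sets_meet_arith_prog: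
  assumes m: "(m::int) \<ge> 1" and s: "1 \<le> s" and t: "1 \<le> t" "s + t = d" and b: "0 \<le> b"
    and disjoint: "(\<lambda>i. m * int i) ` {..<s} \<inter> (\<lambda>i. b + m * int i) ` {..<t} = {}"
    and meet: "J_set m d ((\<lambda>i. m * int i) ` {..<s}) \<inter> J_set m d ((\<lambda>i. b + m * int i) ` {..<t}) \<noteq> {}"
  shows "b = m * int s"
proof -
  have "J_set m d ((\<lambda>i. m * int i) ` {..<s}) = (\<lambda>i. 0 + m * int i) ` {s - 1..<d}"
    using J_set_arith_prog[OF m, of s d 0] s t by simp
  moreover have "J_set m d ((\<lambda>i. b + m * int i) ` {..<t}) = (\<lambda>i. b + m * int i) ` {t - 1..<d}"
    using J_set_arith_prog[OF m, of t d b] t by simp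
  ultimately obtain p q where p: "s - 1 \<le> p" "p < d" and q: "t - 1 \<le> q" "q < d"
    and pq: "m * int p = b + m * int q"
    using meet by auto
  have b_pq: "b = m * (int p - int q)"
    using pq by (simp add: algebra_simps)
  with b have "0 \<le> m * (int p - int q)"
    by simp
  with m have "q \<le> p"
    by (simp add: zero_le_mult_iff)
  define c where "c = p - q"
  have bc: "b = m * int c"
    using b_pq \<open>q \<le> p\<close> by (simp add: c_def of_nat_diff)
  have "c \<le> s"
    using p q t by (simp add: c_def)
  moreover have "\<not> c < s"
  proof
    assume "c < s"
    then have "b \<in> (\<lambda>i. m * int i) ` {..<s}"
      using bc by auto
    moreover have "b \<in> (\<lambda>i. b + m * int i) ` {..<t}"
      using t by (auto intro!: image_eqI[where x=0])
    ultimately show False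
      using disjoint by blast
  qed
  ultimately show ?thesis
    using bc by simp
qed

section \<open>Diagonal hyperplanes and the index lists I, R\<close>

lemma diag_plane_long_I:
  assumes "d \<ge> 1"
  shows "diag_plane V (long_I m d) c = span (V ` (\<lambda>i. c + m * int i) ` {..<d})"
proof -
  have "set (psums (long_I m d)) = (\<lambda>i. m * int i) ` {..<d}"
  proof -
    have "set (psums (long_I m d)) = (\<lambda>j. sum_list (take j (replicate (d - 1) m))) ` {..<d}"
      using assms by (simp add: psums_def long_I_def atLeast0LessThan del: upt_Suc)
    also have "\<dots> = (\<lambda>i. m * int i) ` {..<d}"
      by (intro image_cong) (auto simp: take_replicate sum_list_replicate min_def)
    finally show ?thesis .
  qed
  then show ?thesis
    by (simp add: diag_plane_def image_image)
qed

lemma Inter_diag_planes_arith_prog: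
  fixes V :: "int \<Rightarrow> real^'n"
  assumes m: "(m::int) \<ge> 1" and s: "1 \<le> s" "s \<le> d" and gen: "gen_pos d L V"
    and a: "0 \<le> a" "a + m * int (s - 1) + m * int (d - 1) \<le> L"
  shows "(\<Inter>r\<in>(\<lambda>i. a + m * int i) ` {..<s}. diag_plane V (long_I m d) (k + r))
       = span (V ` (\<lambda>j. k + j) ` (\<lambda>i. a + m * int i) ` {s - 1..<d})"
proof -
  define G where "G i = k + a + m * int i" for i
  have "G ` {..<s - 1 + d} \<subseteq> {k..k + L}"
  proof
    fix x assume "x \<in> G ` {..<s - 1 + d}"
    then obtain i where "i < s - 1 + d" and x: "x = G i"
      by auto
    with s have i: "i \<le> (s - 1) + (d - 1)"
      by linarith
    have "m * int i \<le> m * int (s - 1) + m * int (d - 1)"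
      using i m by (simp flip: distrib_left)
    then show "x \<in> {k..k + L}"
      using a m x by (simp add: G_def)
  qed
  then have "(\<Inter>u\<in>{..s - 1}. span (V ` G ` {u..<u + d})) = span (V ` G ` {s - 1..<d})"
    using m by (intro Inter_span_sliding_windows[OF _ gen]) (auto simp: inj_def G_def)
  moreover have "diag_plane V (long_I m d) (k + (a + m * int u)) = span (V ` G ` {u..<u + d})" for u
    using s diag_plane_long_I[of d V m] arith_prog_shift[of "k + a" m u d]
    by (simp add: G_def add.assoc)
  moreover have "{..<s} = {..s - 1}"
    using s by auto
  ultimately show ?thesis
    by (simp add: G_def image_image add.assoc)
qed

lemma psums_Cons: "psums (c # cs) = 0 # map ((+) c) (psums cs)"
proof -
  have "[0..<length (c # cs) + 1] = 0 # map Suc [0..<length cs + 1]"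
    by (simp add: upt_conv_Cons map_Suc_upt del: upt_Suc)
  then show ?thesis by (simp add: psums_def del: upt_Suc)
qed

lemma psums_diffs: "psums (diffs (x # xs)) = map (\<lambda>z. z - x) (x # xs)"
proof (induction xs arbitrary: x)
  case Nil
  then show ?case by (simp add: diffs_def psums_def)
next
  case (Cons y ys)
  then show ?case by (simp add: diffs_def psums_Cons)
qed

section \<open>The two halves of a long-diagonal map\<close>

locale long_diagonal_data =
  fixes m :: int and d :: nat and Rm Rp :: "int set"
  assumes m_ge_1: "m \<ge> 1"
    and progressions: "arith_prog m Rm" "arith_prog m Rp"
    and disjoint: "Rm \<inter> Rp = {}"
    and card_sum: "card Rm + card Rp = d"
    and Min_zero: "Min (Rm \<union> Rp) = 0"
begin

lemma swap: "long_diagonal_data m d Rp Rm"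
  using m_ge_1 progressions disjoint card_sum Min_zero
  by unfold_locales (auto simp: Un_commute Int_commute)

abbreviation index_range :: int where
  "index_range \<equiv> Max (Rm \<union> Rp) + m * int (d - 1)"

lemma finite_Rm_Un_Rp: "finite (Rm \<union> Rp)"
  using progressions by (auto simp: arith_prog_iff)

lemma zero_mem_Rm_Un_Rp: "0 \<in> Rm \<union> Rp"
proof -
  have "Rm \<union> Rp \<noteq> {}"
    using progressions by (auto simp: arith_prog_iff lessThan_empty_iff)
  then show ?thesis
    using Min_in[OF finite_Rm_Un_Rp] Min_zero by metis
qed

lemma side_progression:
  assumes "R \<in> {Rm, Rp}"
  obtains a s where "R = (\<lambda>i. a + m * int i) ` {..<s}" and "1 \<le> s" and "card R = s"
    and "s \<le> d" and "0 \<le> a" and "a + m * int (s - 1) \<le> Max (Rm \<union> Rp)"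
proof -
  obtain a s where R: "R = (\<lambda>i. a + m * int i) ` {..<s}" and s: "1 \<le> s"
    using assms progressions by (auto simp: arith_prog_iff)
  have card: "card R = s"
    using R card_arith_prog[OF m_ge_1] by simp
  have sub: "R \<subseteq> Rm \<union> Rp" and ne: "R \<noteq> {}"
    using assms R s by (auto simp: lessThan_empty_iff)
  have "0 \<le> a"
    using Min_antimono[OF sub ne finite_Rm_Un_Rp] Min_arith_prog[OF m_ge_1 s] R Min_zero by simp
  moreover have "a + m * int (s - 1) \<le> Max (Rm \<union> Rp)"
    using Max_mono[OF sub ne finite_Rm_Un_Rp] Max_arith_prog[OF m_ge_1 s] R by simp
  moreover have "s \<le> d"
    using assms card card_sum by auto
  ultimately show thesis
    using that R s card by blast
qed

lemma J_set_eq_Inter_windows: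
  "R \<in> {Rm, Rp} \<Longrightarrow> J_set m d R = (\<Inter>r\<in>R. {r + m * int i | i. i < d})"
proof (elim side_progression)
  fix a s
  assume "R = (\<lambda>i. a + m * int i) ` {..<s}" "1 \<le> s" "s \<le> d"
  then show ?thesis
    by (simp only: J_set_arith_prog[OF m_ge_1] Inter_windows_arith_prog[OF m_ge_1])
qed

lemma card_J_set: "R \<in> {Rm, Rp} \<Longrightarrow> card (J_set m d R) + card R = d + 1"
  by (elim side_progression) (simp add: J_set_arith_prog card_arith_prog m_ge_1)

lemma card_J_sets: "card (J_set m d Rm) + card (J_set m d Rp) = d + 2"
  using card_J_set[of Rm] card_J_set[of Rp] card_sum by simp

lemma J_set_subset_index_range: "R \<in> {Rm, Rp} \<Longrightarrow> J_set m d R \<subseteq> {0..index_range}"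
proof (elim side_progression)
  fix a s
  assume R: "R = (\<lambda>i. a + m * int i) ` {..<s}" and s: "1 \<le> s"
    and a: "0 \<le> a" "a + m * int (s - 1) \<le> Max (Rm \<union> Rp)"
  have "0 \<le> m * int (s - 1)"
    using m_ge_1 by simp
  then have "0 \<le> Max R" and "Min R \<le> Max (Rm \<union> Rp)"
    using a by (simp_all add: R Max_arith_prog[OF m_ge_1 s] Min_arith_prog[OF m_ge_1 s])
  then show "J_set m d R \<subseteq> {0..index_range}"
    using m_ge_1 by (intro order_trans[OF J_set_subset]) auto
qed

lemma Inter_diag_planes:
  fixes V :: "int \<Rightarrow> real^'n"
  assumes "gen_pos d index_range V" and "R \<in> {Rm, Rp}"
  shows "(\<Inter>r\<in>R. diag_plane V (long_I m d) (k + r)) = span (V ` (\<lambda>j. k + j) ` J_set m d R)"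
  using assms(2)
proof (elim side_progression)
  fix a s
  assume "R = (\<lambda>i. a + m * int i) ` {..<s}" "1 \<le> s" "s \<le> d" "0 \<le> a"
    "a + m * int (s - 1) \<le> Max (Rm \<union> Rp)"
  then show ?thesis
    using Inter_diag_planes_arith_prog[OF m_ge_1 _ _ assms(1)] J_set_arith_prog[OF m_ge_1]
    by simp
qed

lemma set_psums_long_R: "set (psums (long_R Rm Rp)) = Rm \<union> Rp"
proof -
  have "Rm \<union> Rp \<noteq> {}"
    using zero_mem_Rm_Un_Rp by blast
  then have "sorted_list_of_set (Rm \<union> Rp) = 0 # sorted_list_of_set (Rm \<union> Rp - {0})"
    using sorted_list_of_set_nonempty[OF finite_Rm_Un_Rp] Min_zero by simp
  then have "set (psums (long_R Rm Rp)) = set (sorted_list_of_set (Rm \<union> Rp))"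
    unfolding long_R_def by (simp only: psums_diffs) simp
  then show ?thesis
    using finite_Rm_Un_Rp by simp
qed

lemma Inter_diag_planes_and_TIR_point:
  fixes V :: "int \<Rightarrow> real^'n"
  assumes "gen_pos d index_range V"
  shows "(\<Inter>r\<in>Rm. diag_plane V (long_I m d) (k + r)) = span (V ` (\<lambda>j. k + j) ` J_set m d Rm)
    \<and> (\<Inter>r\<in>Rp. diag_plane V (long_I m d) (k + r)) = span (V ` (\<lambda>j. k + j) ` J_set m d Rp)
    \<and> TIR_point V (long_I m d) (long_R Rm Rp) k
      = span (V ` (\<lambda>j. k + j) ` J_set m d Rm) \<inter> span (V ` (\<lambda>j. k + j) ` J_set m d Rp)"
  using Inter_diag_planes[OF assms, of Rm k] Inter_diag_planes[OF assms, of Rp k]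
  unfolding TIR_point_def set_psums_long_R INT_Un by simp

lemma prog_split_if_J_sets_meet:
  assumes zero: "0 \<in> Rm" and meet: "J_set m d Rm \<inter> J_set m d Rp \<noteq> {}"
  shows "prog_split m d Rm Rp"
proof -
  obtain a s where Rm: "Rm = (\<lambda>i. a + m * int i) ` {..<s}" and s: "1 \<le> s" "card Rm = s" "0 \<le> a"
    by (rule side_progression[of Rm]) auto
  obtain b t where Rp: "Rp = (\<lambda>i. b + m * int i) ` {..<t}" and t: "1 \<le> t" "card Rp = t" "0 \<le> b"
    by (rule side_progression[of Rp]) auto
  have d: "s + t = d"
    using card_sum s t by simp
  have "a = 0"
    using zero s m_ge_1 unfolding Rm by (auto simp: add_nonneg_eq_0_iff)
  then have Rm0: "Rm = (\<lambda>i. m * int i) ` {..<s}"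
    using Rm by simp
  have "b = m * int s"
    using disjoint meet unfolding Rm0 Rp by (rule J_sets_meet_arith_prog[OF m_ge_1 s(1) t(1) d t(3)])
  then have "Rp = (\<lambda>i. m * int i) ` {s..<d}"
    using Rp arith_prog_shift[of 0 m s t] d by simp
  then show ?thesis
    unfolding prog_split_iff using Rm0 s t d by auto
qed

lemma J_sets_disjoint_iff:
  "J_set m d Rm \<inter> J_set m d Rp = {} \<longleftrightarrow> \<not> (prog_split m d Rm Rp \<or> prog_split m d Rp Rm)"
proof
  assume "J_set m d Rm \<inter> J_set m d Rp = {}"
  then show "\<not> (prog_split m d Rm Rp \<or> prog_split m d Rp Rm)"
    using J_set_Int_prog_split[OF m_ge_1, of d Rm Rp] J_set_Int_prog_split[OF m_ge_1, of d Rp Rm]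
    Int_commute[of "J_set m d Rm"] by auto
next
  assume no_split: "\<not> (prog_split m d Rm Rp \<or> prog_split m d Rp Rm)"
  interpret swapped: long_diagonal_data m d Rp Rm
    by (rule swap)
  show "J_set m d Rm \<inter> J_set m d Rp = {}"
  proof (cases "0 \<in> Rm")
    case True
    then show ?thesis
      using prog_split_if_J_sets_meet no_split by blast
  next
    case False
    then have "0 \<in> Rp"
      using zero_mem_Rm_Un_Rp by blast
    then show ?thesis
      using swapped.prog_split_if_J_sets_meet no_split Int_commute[of "J_set m d Rm"] by auto
  qed
qed

lemma TIR_point_prog_split:
  fixes V :: "int \<Rightarrow> real^'n"
  assumes gen: "gen_pos d index_range V" and split: "prog_split m d Rm Rp \<or> prog_split m d Rp Rm"
  shows "TIR_point V (long_I m d) (long_R Rm Rp) k = span {V (k + m * int (d - 1))}"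
proof -
  let ?A = "(\<lambda>j. k + j) ` J_set m d Rm" and ?B = "(\<lambda>j. k + j) ` J_set m d Rp"
  have inj: "inj (\<lambda>j::int. k + j)"
    by (simp add: inj_def)
  have Int: "J_set m d Rm \<inter> J_set m d Rp = {m * int (d - 1)}"
    using split J_set_Int_prog_split[OF m_ge_1, of d Rm Rp] J_set_Int_prog_split[OF m_ge_1, of d Rp Rm]
    Int_commute[of "J_set m d Rm"] by auto
  have "card (J_set m d Rm \<union> J_set m d Rp) = d + 1"
    using card_Un_Int[OF finite_J_set finite_J_set] card_J_sets Int m_ge_1 by simp
  then have "card (?A \<union> ?B) = d + 1"
    by (simp add: image_Un[symmetric] card_image inj_on_subset[OF inj])
  moreover have "?A \<union> ?B \<subseteq> {k..k + index_range}"
    using J_set_subset_index_range[of Rm] J_set_subset_index_range[of Rp] by auto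
  ultimately have "span (V ` ?A) \<inter> span (V ` ?B) = span (V ` (?A \<inter> ?B))"
    by (intro span_image_Int_gen_pos[OF gen]) auto
  also have "?A \<inter> ?B = {k + m * int (d - 1)}"
    by (simp add: image_Int[OF inj, symmetric] Int)
  finally show ?thesis
    using Inter_diag_planes_and_TIR_point[OF gen] by simp
qed

end

theorem mainTheorem12:
  fixes m :: int and d :: nat and Rm Rp :: "int set"
  assumes "m \<ge> 1"
    and "arith_prog m Rm" and "arith_prog m Rp"
    and "Rm \<inter> Rp = {}"
    and "card Rm + card Rp = d"
    and "Min (Rm \<union> Rp) = 0"
    and "CARD('n) = d + 1"
  shows
    "J_set m d Rm = (\<Inter>r\<in>Rm. {r + m * int i | i. i < d})
     \<and> J_set m d Rp = (\<Inter>r\<in>Rp. {r + m * int i | i. i < d})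
     \<and> card (J_set m d Rm) + card (J_set m d Rp) = d + 2
     \<and> (\<forall>(n::nat) (V :: int \<Rightarrow> real^'n).
          twisted_ngon n V \<and> gen_pos d (Max (Rm \<union> Rp) + m * int (d - 1)) V \<longrightarrow>
          (\<forall>k. (\<Inter>r\<in>Rm. diag_plane V (long_I m d) (k + r)) = span (V ` ((\<lambda>j. k + j) ` J_set m d Rm))
             \<and> (\<Inter>r\<in>Rp. diag_plane V (long_I m d) (k + r)) = span (V ` ((\<lambda>j. k + j) ` J_set m d Rp))
             \<and> TIR_point V (long_I m d) (long_R Rm Rp) k =
                 span (V ` ((\<lambda>j. k + j) ` J_set m d Rm)) \<inter> span (V ` ((\<lambda>j. k + j) ` J_set m d Rp))))
     \<and> ((J_set m d Rm \<inter> J_set m d Rp = {}) \<longleftrightarrow>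
          \<not> (\<exists>j::nat. j < d - 1 \<and>
               ((Rm = {m * int i | i. i \<le> j} \<and> Rp = {m * int i | i. j < i \<and> i \<le> d - 1}) \<or>
                (Rp = {m * int i | i. i \<le> j} \<and> Rm = {m * int i | i. j < i \<and> i \<le> d - 1}))))
     \<and> ((\<exists>j::nat. j < d - 1 \<and>
               ((Rm = {m * int i | i. i \<le> j} \<and> Rp = {m * int i | i. j < i \<and> i \<le> d - 1}) \<or>
                (Rp = {m * int i | i. i \<le> j} \<and> Rm = {m * int i | i. j < i \<and> i \<le> d - 1})))
        \<longrightarrow> (\<exists>c::int. \<forall>(n::nat) (V :: int \<Rightarrow> real^'n).
              twisted_ngon n V \<and> gen_pos d (Max (Rm \<union> Rp) + m * int (d - 1)) V \<longrightarrow>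
              (\<forall>k. TIR_point V (long_I m d) (long_R Rm Rp) k = span {V (k + c)})))"
proof -
  interpret long_diagonal_data m d Rm Rp
    using assms by unfold_locales
  have split: "(\<exists>j::nat. j < d - 1 \<and>
               ((Rm = {m * int i | i. i \<le> j} \<and> Rp = {m * int i | i. j < i \<and> i \<le> d - 1}) \<or>
                (Rp = {m * int i | i. i \<le> j} \<and> Rm = {m * int i | i. j < i \<and> i \<le> d - 1})))
      \<longleftrightarrow> prog_split m d Rm Rp \<or> prog_split m d Rp Rm"
    unfolding prog_split_def by blast
  have planes: "\<forall>(n::nat) (V :: int \<Rightarrow> real^'n).
      twisted_ngon n V \<and> gen_pos d index_range V \<longrightarrow>
      (\<forall>k. (\<Inter>r\<in>Rm. diag_plane V (long_I m d) (k + r)) = span (V ` ((\<lambda>j. k + j) ` J_set m d Rm))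
        \<and> (\<Inter>r\<in>Rp. diag_plane V (long_I m d) (k + r)) = span (V ` ((\<lambda>j. k + j) ` J_set m d Rp))
        \<and> TIR_point V (long_I m d) (long_R Rm Rp) k =
            span (V ` ((\<lambda>j. k + j) ` J_set m d Rm)) \<inter> span (V ` ((\<lambda>j. k + j) ` J_set m d Rp)))"
    using Inter_diag_planes_and_TIR_point by blast
  have identity: "prog_split m d Rm Rp \<or> prog_split m d Rp Rm \<longrightarrow>
      (\<exists>c. \<forall>(n::nat) (V :: int \<Rightarrow> real^'n). twisted_ngon n V \<and> gen_pos d index_range V \<longrightarrow>
        (\<forall>k. TIR_point V (long_I m d) (long_R Rm Rp) k = span {V (k + c)}))"
    using TIR_point_prog_split by blast
  show ?thesis
    unfolding split J_sets_disjoint_iff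
    by (intro conjI J_set_eq_Inter_windows card_J_sets planes identity refl) simp_all
qed

end
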